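(* For $x\in(0,1)$, let $\lambda\in\mathbb{R}$ be the solution of $x=e^{-e^{\lambda}}(e^{\lambda}+1)$. Then $$\lambda-\log(-\log x)\le\log\tfrac23+\log\Big(1+\sqrt{1-\tfrac{9}{2\log x}}\Big)$$ and $$\lambda-\log(-\log x)\ge-\log 2+\log\Big(1+\sqrt{1-\tfrac{8}{\log x}}\Big).$$
   Context: $\log$ denotes the natural logarithm. *)

theory Defs
  imports Complex_Main
begin

end

theory Submission
  imports Defs
begin

text \<open>Put \<open>t = exp \<lambda>\<close> and \<open>L = t - ln (1 + t) = - ln x\<close>, so that
  \<open>\<lambda> - ln (- ln x) = ln (t / L)\<close>. The rational bounds
  \<open>2t/(2+t) \<le> ln (1+t) \<le> t(6+t)/(6+4t)\<close> turn into the quadratic inequalities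
  \<open>r + 2/L \<le> r\<^sup>2\<close> and \<open>3/4 r\<^sup>2 \<le> r + 3/(2L)\<close> for \<open>r = t/L\<close>, and solving them
  for \<open>r\<close> gives the two estimates.\<close>

lemma ln_add_one_ge:
  fixes t :: real
  assumes "0 \<le> t"
  shows "2 * t / (2 + t) \<le> ln (1 + t)"
proof -
  let ?f = "\<lambda>s::real. ln (1 + s) - 2 * s / (2 + s)"
  have "?f 0 \<le> ?f t"
  proof (rule DERIV_nonneg_imp_increasing_open[OF assms])
    fix s :: real
    assume s: "0 < s" "s < t"
    have "DERIV ?f s :> 1 / (1 + s) - (2 * (2 + s) - 2 * s) / (2 + s)\<^sup>2"
      using s by (auto intro!: derivative_eq_intros simp: power2_eq_square)
    moreover have "1 / (1 + s) - (2 * (2 + s) - 2 * s) / (2 + s)\<^sup>2 = s\<^sup>2 / ((1 + s) * (2 + s)\<^sup>2)"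
      using s by (simp add: divide_simps) algebra
    moreover have "s\<^sup>2 / ((1 + s) * (2 + s)\<^sup>2) \<ge> 0"
      using s by simp
    ultimately show "\<exists>y. DERIV ?f s :> y \<and> y \<ge> 0"
      by auto
  qed (auto intro!: continuous_intros)
  then show ?thesis
    by simp
qed

lemma ln_add_one_le:
  fixes t :: real
  assumes "0 \<le> t"
  shows "ln (1 + t) \<le> t * (6 + t) / (6 + 4 * t)"
proof -
  let ?f = "\<lambda>s::real. s * (6 + s) / (6 + 4 * s) - ln (1 + s)"
  have "?f 0 \<le> ?f t"
  proof (rule DERIV_nonneg_imp_increasing_open[OF assms])
    fix s :: real
    assume s: "0 < s" "s < t"
    have "DERIV ?f s :> ((6 + 2 * s) * (6 + 4 * s) - s * (6 + s) * 4) / (6 + 4 * s)\<^sup>2 - 1 / (1 + s)"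
      using s by (auto intro!: derivative_eq_intros simp: power2_eq_square)
    moreover have "((6 + 2 * s) * (6 + 4 * s) - s * (6 + s) * 4) / (6 + 4 * s)\<^sup>2 - 1 / (1 + s)
        = 4 * s ^ 3 / ((6 + 4 * s)\<^sup>2 * (1 + s))"
      using s by (simp add: divide_simps) algebra
    moreover have "4 * s ^ 3 / ((6 + 4 * s)\<^sup>2 * (1 + s)) \<ge> 0"
      using s by simp
    ultimately show "\<exists>y. DERIV ?f s :> y \<and> y \<ge> 0"
      by auto
  qed (use assms in \<open>auto intro!: continuous_intros\<close>)
  then show ?thesis
    by simp
qed

lemma le_quadratic_root_if_quadratic_le:
  fixes a b c r :: real
  assumes "0 < a" and "a * r\<^sup>2 \<le> b * r + c"
  shows "r \<le> (b + sqrt (b\<^sup>2 + 4 * a * c)) / (2 * a)"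
proof -
  have "(2 * a * r - b)\<^sup>2 = 4 * a * (a * r\<^sup>2 - b * r) + b\<^sup>2"
    by (simp add: power2_eq_square algebra_simps)
  also have "\<dots> \<le> b\<^sup>2 + 4 * a * c"
    using assms by (simp add: mult_left_mono)
  finally have "2 * a * r - b \<le> sqrt (b\<^sup>2 + 4 * a * c)"
    using real_le_rsqrt abs_le_D1 real_sqrt_abs by metis
  then show ?thesis
    using assms(1) by (simp add: field_simps)
qed

lemma quadratic_root_le_if_quadratic_ge:
  fixes a b c r :: real
  assumes "0 < a" and "b * r + c \<le> a * r\<^sup>2" and "b \<le> 2 * a * r"
  shows "(b + sqrt (b\<^sup>2 + 4 * a * c)) / (2 * a) \<le> r"
proof -
  have "b\<^sup>2 + 4 * a * c \<le> 4 * a * (a * r\<^sup>2 - b * r) + b\<^sup>2"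
    using assms by (simp add: mult_left_mono)
  also have "\<dots> = (2 * a * r - b)\<^sup>2"
    by (simp add: power2_eq_square algebra_simps)
  finally have "sqrt (b\<^sup>2 + 4 * a * c) \<le> 2 * a * r - b"
    using assms(3) by (metis real_sqrt_le_mono real_sqrt_abs abs_of_nonneg diff_ge_0_iff_ge)
  then show ?thesis
    using assms(1) by (simp add: field_simps)
qed

lemma div_sub_ln_add_one_le:
  fixes t L :: real
  assumes "0 < t" and "L = t - ln (1 + t)"
  shows "t / L \<le> 2/3 * (1 + sqrt (1 + 9 / (2 * L)))"
proof -
  have "0 < L"
    using assms ln_add_one_self_less_self by simp
  have "ln (1 + t) * (6 + 4 * t) \<le> t * (6 + t)"
    using ln_add_one_le[of t] assms(1) by (simp add: pos_le_divide_eq)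
  then have "3 * t\<^sup>2 \<le> L * (4 * t + 6)"
    unfolding assms(2) by (simp add: algebra_simps power2_eq_square)
  then have "3/4 * (t / L)\<^sup>2 \<le> 1 * (t / L) + 3 / (2 * L)"
    using \<open>0 < L\<close> by (simp add: field_simps power2_eq_square)
  from le_quadratic_root_if_quadratic_le[OF _ this]
  show ?thesis
    by (simp add: field_simps)
qed

lemma div_sub_ln_add_one_ge:
  fixes t L :: real
  assumes "0 < t" and "L = t - ln (1 + t)"
  shows "1/2 * (1 + sqrt (1 + 8 / L)) \<le> t / L"
proof -
  have "0 < L" "L < t"
    using assms ln_add_one_self_less_self ln_gt_zero[of "1 + t"] by simp_all
  have "2 * t \<le> ln (1 + t) * (2 + t)"
    using ln_add_one_ge[of t] assms(1) by (simp add: pos_divide_le_eq)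
  then have "L * (t + 2) \<le> t\<^sup>2"
    unfolding assms(2) by (simp add: algebra_simps power2_eq_square)
  then have "1 * (t / L) + 2 / L \<le> 1 * (t / L)\<^sup>2"
  proof -
    have "1 * (t / L) + 2 / L = L * (t + 2) / L\<^sup>2"
      using \<open>0 < L\<close> by (simp add: field_simps power2_eq_square)
    also have "\<dots> \<le> t\<^sup>2 / L\<^sup>2"
      by (rule divide_right_mono) (fact, simp)
    finally show ?thesis
      by (simp add: power_divide)
  qed
  moreover have "1 \<le> 2 * 1 * (t / L)"
    using \<open>0 < L\<close> \<open>L < t\<close> by (simp add: field_simps)
  ultimately have "(1 + sqrt (1\<^sup>2 + 4 * 1 * (2 / L))) / (2 * 1) \<le> t / L"
    by (intro quadratic_root_le_if_quadratic_ge) auto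
  then show ?thesis
    by simp
qed

theorem lemma1:
  fixes x l :: real
  assumes "0 < x" and "x < 1"
    and "x = exp (- exp l) * (exp l + 1)"
  shows "l - ln (- ln x) \<le> ln (2/3) + ln (1 + sqrt (1 - 9 / (2 * ln x)))
    \<and> l - ln (- ln x) \<ge> - ln 2 + ln (1 + sqrt (1 - 8 / ln x))"
proof -
  define t where "t = exp l"
  define L where "L = t - ln (1 + t)"
  have "0 < t"
    by (simp add: t_def)
  have "x = exp (- t) * (1 + t)"
    using assms(3) by (simp add: t_def add.commute)
  then have ln_x: "ln x = - L"
    using \<open>0 < t\<close> by (simp add: L_def ln_mult)
  have "0 < L"
    using \<open>0 < t\<close> ln_add_one_self_less_self by (simp add: L_def)
  have ratio: "l - ln (- ln x) = ln (t / L)"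
    using \<open>0 < L\<close> ln_x by (simp add: ln_div t_def)
  also have "\<dots> \<le> ln (2/3 * (1 + sqrt (1 + 9 / (2 * L))))"
    using div_sub_ln_add_one_le[OF \<open>0 < t\<close> L_def] \<open>0 < t\<close> \<open>0 < L\<close> by (intro ln_mono) auto
  also have "\<dots> = ln (2/3) + ln (1 + sqrt (1 + 9 / (2 * L)))"
    using \<open>0 < L\<close> by (intro ln_mult_pos add_pos_nonneg) auto
  finally have upper: "l - ln (- ln x) \<le> ln (2/3) + ln (1 + sqrt (1 - 9 / (2 * ln x)))"
    by (simp add: ln_x)
  have "- ln 2 + ln (1 + sqrt (1 + 8 / L)) = ln (1/2 * (1 + sqrt (1 + 8 / L)))"
    using \<open>0 < L\<close> by (subst ln_mult_pos) (auto intro: add_pos_nonneg simp: ln_div)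
  also have "\<dots> \<le> ln (t / L)"
    using div_sub_ln_add_one_ge[OF \<open>0 < t\<close> L_def] \<open>0 < L\<close>
    by (intro ln_mono) (auto intro: add_pos_nonneg)
  also have "\<dots> = l - ln (- ln x)"
    by (rule ratio[symmetric])
  finally have lower: "- ln 2 + ln (1 + sqrt (1 - 8 / ln x)) \<le> l - ln (- ln x)"
    by (simp add: ln_x)
  show ?thesis
    using upper lower by simp
qed

end
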